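(* Consider a sequence of finite populations indexed by $n\to\infty$, each satisfying Assumption 1, Assumption 2 and the null hypothesis $H_0:\ T_i(1)=T_i(0)$ for all $i$, and condition on all potential event times. Then $$\sum_{k=1}^{K-1}\xi_{2k}=\tilde d^{1/2}\log n\cdot O_{\Pr}(1),$$ where $\xi_{2k}=\frac{D_k\,\mathbb{E}\{N_{1k}(N_k-N_{1k})\mid\boldsymbol{T}(1),\boldsymbol{T}(0),N_k\}}{N_k^2(N_k-1)}\big\{(N_k-D_k)-\mathbb{E}(N_k-D_k\mid\boldsymbol{T}(1),\boldsymbol{T}(0),N_k)\big\}$.
   Context: Unit $i$ ($1\le i\le n$) has potential event times $T_i(1),T_i(0)\ge 0$ (fixed constants), potential censoring times $C_i(1),C_i(0)\in[0,\infty]$, treatment indicator $Z_i\in\{0,1\}$; bold letters denote $n$-vectors. Assumption 1: conditional on all potential event and censoring times, the $Z_i$ are i.i.d. Bernoulli$(p_1)$, $p_1=1-p_0\in(0,1)$. Assumption 2: $(\boldsymbol{C}(1),\boldsymbol{C}(0))$ is independent of $(\boldsymbol{T}(1),\boldsymbol{T}(0))$ and the pairs $(C_i(1),C_i(0))$ are i.i.d. across $i$. Realized: $W_i=\min\{T_i,C_i\}$, $\Delta_i=\mathbb{1}(T_i\le C_i)$ with $T_i=Z_iT_i(1)+(1-Z_i)T_i(0)$, $C_i=Z_iC_i(1)+(1-Z_i)C_i(0)$. Let $t_1<\dots<t_K$ be the distinct values of $\{T_i(0)\}$, $d_k=\#\{i:T_i(0)=t_k\}$, $\tilde d=\max_kd_k$;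 $N_{1k}=\sum_iZ_i\mathbb{1}(W_i\ge t_k)$, $N_k=\sum_i\mathbb{1}(W_i\ge t_k)$, $D_k=\sum_i\Delta_i\mathbb{1}(W_i=t_k)$; convention $0/0:=0$. $X_n=a_nO_{\Pr}(1)$ means $X_n/a_n$ is bounded in probability as $n\to\infty$; all quantities may depend on $n$. *)

theory Defs
  imports "HOL-Probability.Probability"
begin

text \<open>Finite-population model under H0 (T_i(1) = T_i(0) = t i, fixed constants).
  Unit i carries the random triple (Z_i, C_i(1), C_i(0)) in bool x [0,inf] x [0,inf].\<close>

definition trial_space :: "nat \<Rightarrow> real \<Rightarrow> (ennreal \<times> ennreal) measure
      \<Rightarrow> (nat \<Rightarrow> bool \<times> ennreal \<times> ennreal) measure" where
  "trial_space n p G = PiM {..<n} (\<lambda>_. measure_pmf (bernoulli_pmf p) \<Otimes>\<^sub>M G)"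

definition realC :: "bool \<times> ennreal \<times> ennreal \<Rightarrow> ennreal" where
  "realC u = (if fst u then fst (snd u) else snd (snd u))"

definition obsW :: "(nat \<Rightarrow> real) \<Rightarrow> nat \<Rightarrow> (nat \<Rightarrow> bool \<times> ennreal \<times> ennreal) \<Rightarrow> ennreal" where
  "obsW t i \<omega> = min (ennreal (t i)) (realC (\<omega> i))"

definition obsDelta :: "(nat \<Rightarrow> real) \<Rightarrow> nat \<Rightarrow> (nat \<Rightarrow> bool \<times> ennreal \<times> ennreal) \<Rightarrow> bool" where
  "obsDelta t i \<omega> = (ennreal (t i) \<le> realC (\<omega> i))"

definition atRiskTrt :: "nat \<Rightarrow> (nat \<Rightarrow> real) \<Rightarrow> real \<Rightarrow> (nat \<Rightarrow> bool \<times> ennreal \<times> ennreal) \<Rightarrow> real" where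
  "atRiskTrt n t v \<omega> = real (card {i. i < n \<and> fst (\<omega> i) \<and> ennreal v \<le> obsW t i \<omega>})"

definition atRisk :: "nat \<Rightarrow> (nat \<Rightarrow> real) \<Rightarrow> real \<Rightarrow> (nat \<Rightarrow> bool \<times> ennreal \<times> ennreal) \<Rightarrow> real" where
  "atRisk n t v \<omega> = real (card {i. i < n \<and> ennreal v \<le> obsW t i \<omega>})"

definition events :: "nat \<Rightarrow> (nat \<Rightarrow> real) \<Rightarrow> real \<Rightarrow> (nat \<Rightarrow> bool \<times> ennreal \<times> ennreal) \<Rightarrow> real" where
  "events n t v \<omega> = real (card {i. i < n \<and> obsDelta t i \<omega> \<and> obsW t i \<omega> = ennreal v})"

text \<open>Elementary conditional expectation of X given a discrete random variable Y
  (evaluated at \<omega>); 0/0 = 0.\<close>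
definition condExpDisc :: "'a measure \<Rightarrow> ('a \<Rightarrow> real) \<Rightarrow> ('a \<Rightarrow> 'b) \<Rightarrow> 'a \<Rightarrow> real" where
  "condExpDisc M X Y \<omega> =
     (\<integral>\<omega>'. indicator {\<omega>' \<in> space M. Y \<omega>' = Y \<omega>} \<omega>' * X \<omega>' \<partial>M)
       / measure M {\<omega>' \<in> space M. Y \<omega>' = Y \<omega>}"

definition distinct_times :: "nat \<Rightarrow> (nat \<Rightarrow> real) \<Rightarrow> real set" where
  "distinct_times n t = t ` {..<n}"

definition tie_count :: "nat \<Rightarrow> (nat \<Rightarrow> real) \<Rightarrow> real \<Rightarrow> nat" where
  "tie_count n t v = card {i. i < n \<and> t i = v}"

definition max_tie :: "nat \<Rightarrow> (nat \<Rightarrow> real) \<Rightarrow> nat" where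
  "max_tie n t = Max (tie_count n t ` distinct_times n t)"

definition xi2 :: "(nat \<Rightarrow> bool \<times> ennreal \<times> ennreal) measure \<Rightarrow> nat \<Rightarrow> (nat \<Rightarrow> real) \<Rightarrow> real
      \<Rightarrow> (nat \<Rightarrow> bool \<times> ennreal \<times> ennreal) \<Rightarrow> real" where
  "xi2 M n t v \<omega> =
     events n t v \<omega>
       * condExpDisc M (\<lambda>\<omega>'. atRiskTrt n t v \<omega>' * (atRisk n t v \<omega>' - atRiskTrt n t v \<omega>')) (atRisk n t v) \<omega>
       / ((atRisk n t v \<omega>)\<^sup>2 * (atRisk n t v \<omega> - 1))
       * ((atRisk n t v \<omega> - events n t v \<omega>)
          - condExpDisc M (\<lambda>\<omega>'. atRisk n t v \<omega>' - events n t v \<omega>') (atRisk n t v) \<omega>)"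

text \<open>Sum over k = 1..K-1, i.e. over all distinct event times except the largest.\<close>
definition xi2_sum :: "(nat \<Rightarrow> bool \<times> ennreal \<times> ennreal) measure \<Rightarrow> nat \<Rightarrow> (nat \<Rightarrow> real)
      \<Rightarrow> (nat \<Rightarrow> bool \<times> ennreal \<times> ennreal) \<Rightarrow> real" where
  "xi2_sum M n t \<omega> = (\<Sum>v \<in> distinct_times n t - {Max (distinct_times n t)}. xi2 M n t v \<omega>)"

definition bounded_in_prob :: "(nat \<Rightarrow> 'a measure) \<Rightarrow> (nat \<Rightarrow> 'a \<Rightarrow> real) \<Rightarrow> bool" where
  "bounded_in_prob M X \<longleftrightarrow>
     (\<forall>e>0. \<exists>B. \<exists>N. \<forall>n\<ge>N. measure (M n) {\<omega> \<in> space (M n). B < \<bar>X n \<omega>\<bar>} \<le> e)"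

end

(*
  Fix an event time v with d tied units and N0 units satisfying T_i >= v. The units still at
  risk at v form a random subset K of these N0 units, N = |K|, and D counts the tied units in K.
  As the (treatment, censoring) triples are i.i.d., the law of K is invariant under permutations
  of the units, so given N = m the count D is hypergeometric: counting r-subsets of K gives its
  factorial moments, whence E(D | N = m) = mu_m = m d / N0 and Var(D | N = m) <= mu_m.
  Since N1 (N - N1) <= N^2 / 4 and the centred factor of xi_2k equals mu_N - D, this yields
  |xi_2k| <= D |mu_N - D| / (4 (N - 1)), whose expectation is at most (d / N0) sqrt d.
  Summing over the event times, sum_k d_k / N0_k = sum_i 1 / #{j. T_j >= T_i} <= H_n <= 1 + log n,
  and Markov's inequality concludes.
*)
theory Submission
  imports Defs "HOL-Analysis.Harmonic_Numbers"
begin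

lemma harm_le_1_plus_ln: "1 \<le> n \<Longrightarrow> harm n \<le> 1 + ln (real n)"
  using decseqD[OF decseq_harm_diff_ln, of 0 "n - 1"] by (simp add: harm_expand(2))

lemma sum_inverse_card_upper_le_harm:
  fixes t :: "'i \<Rightarrow> 'b::linorder"
  assumes "finite S"
  shows "(\<Sum>i\<in>S. 1 / real (card {j\<in>S. t i \<le> t j})) \<le> harm (card S)"
  using assms
proof (induction "card S" arbitrary: S)
  case 0
  then show ?case by (simp add: harm_expand(1))
next
  case (Suc k)
  obtain i0 where i0: "i0 \<in> S" and i0_min: "\<And>j. j \<in> S \<Longrightarrow> t i0 \<le> t j"
  proof -
    have "Min (t ` S) \<in> t ` S"
      using Suc.hyps(2) Suc.prems by (intro Min_in) auto
    then obtain i0 where "i0 \<in> S" "t i0 = Min (t ` S)"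
      by (metis imageE)
    then show thesis
      using that Suc.prems by simp
  qed
  define S' where "S' = S - {i0}"
  have S': "finite S'" "card S' = k"
    using Suc.hyps(2) Suc.prems i0 by (simp_all add: S'_def)
  have "1 / real (card {j\<in>S. t i \<le> t j}) \<le> 1 / real (card {j\<in>S'. t i \<le> t j})"
    if "i \<in> S'" for i
  proof -
    have "0 < card {j\<in>S'. t i \<le> t j}"
      using that S'(1) by (auto simp: card_gt_0_iff)
    moreover have "card {j\<in>S'. t i \<le> t j} \<le> card {j\<in>S. t i \<le> t j}"
      using Suc.prems by (auto simp: S'_def intro!: card_mono)
    ultimately show ?thesis
      by (intro divide_left_mono) auto
  qed
  then have "(\<Sum>i\<in>S'. 1 / real (card {j\<in>S. t i \<le> t j}))
      \<le> (\<Sum>i\<in>S'. 1 / real (card {j\<in>S'. t i \<le> t j}))"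
    by (rule sum_mono)
  also have "\<dots> \<le> harm k"
    using Suc.hyps(1)[of S'] S' by simp
  finally have IH: "(\<Sum>i\<in>S'. 1 / real (card {j\<in>S. t i \<le> t j})) \<le> harm k" .
  have "{j\<in>S. t i0 \<le> t j} = S"
    using i0_min by auto
  then have "(\<Sum>i\<in>S. 1 / real (card {j\<in>S. t i \<le> t j}))
      = 1 / real (Suc k) + (\<Sum>i\<in>S'. 1 / real (card {j\<in>S. t i \<le> t j}))"
    using Suc.prems Suc.hyps(2) i0 by (simp add: S'_def sum.remove)
  also have "\<dots> \<le> harm (Suc k)"
    using IH by (simp add: harm_Suc divide_inverse)
  finally show ?case
    using Suc.hyps(2) by simp
qed

lemma sum_tie_count_div_at_risk_le_harm:
  fixes t :: "nat \<Rightarrow> real"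
  shows "(\<Sum>v\<in>distinct_times n t. real (tie_count n t v) / real (card {i. i < n \<and> v \<le> t i}))
    \<le> harm n"
proof -
  have "(\<Sum>v\<in>distinct_times n t. real (tie_count n t v) / real (card {i. i < n \<and> v \<le> t i}))
      = (\<Sum>v\<in>t ` {..<n}. \<Sum>i\<in>{i\<in>{..<n}. t i = v}. 1 / real (card {j\<in>{..<n}. t i \<le> t j}))"
  proof (intro sum.cong)
    fix v
    have "tie_count n t v = card {i\<in>{..<n}. t i = v}"
      unfolding tie_count_def by (rule arg_cong[where f = card]) auto
    moreover have "{i. i < n \<and> v \<le> t i} = {j\<in>{..<n}. v \<le> t j}"
      by auto
    ultimately show "real (tie_count n t v) / real (card {i. i < n \<and> v \<le> t i})
        = (\<Sum>i\<in>{i\<in>{..<n}. t i = v}. 1 / real (card {j\<in>{..<n}. t i \<le> t j}))"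
      by simp
  qed (simp add: distinct_times_def)
  also have "\<dots> = (\<Sum>i<n. 1 / real (card {j\<in>{..<n}. t i \<le> t j}))"
    by (rule sum.image_gen[symmetric]) simp
  also have "\<dots> \<le> harm n"
    using sum_inverse_card_upper_le_harm[of "{..<n}" t] by simp
  finally show ?thesis .
qed

lemma real_choose_two: "2 * real (k choose 2) = real k * (real k - 1)"
proof (induction k)
  case (Suc k)
  have "Suc k choose 2 = k + (k choose 2)"
    using binomial_Suc_Suc[of k 1] by (simp add: numeral_2_eq_2)
  then show ?case
    using Suc by (simp add: algebra_simps)
qed simp

lemma hypergeometric_mean_variance:
  fixes w :: "nat \<Rightarrow> real" and S :: "nat set" and N d m :: nat
  defines "\<mu> \<equiv> real m * real d / real N"
  assumes w_nonneg: "\<And>k. 0 \<le> w k" and w_support: "\<And>k. d < k \<Longrightarrow> w k = 0"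
    and d_le: "d \<le> N" and m_le: "m \<le> N"
    and first: "real N * (\<Sum>k\<in>S. real k * w k) = real d * real m * (\<Sum>k\<in>S. w k)"
    and second: "real N * (real N - 1) * (\<Sum>k\<in>S. real k * (real k - 1) * w k)
      = real d * (real d - 1) * (real m * (real m - 1)) * (\<Sum>k\<in>S. w k)"
  shows "(\<Sum>k\<in>S. real k * w k) = \<mu> * (\<Sum>k\<in>S. w k)"
    and "(\<Sum>k\<in>S. (real k - \<mu>)\<^sup>2 * w k) \<le> \<mu> * (\<Sum>k\<in>S. w k)"
proof -
  define W where "W = (\<Sum>k\<in>S. w k)"
  have W_nonneg: "0 \<le> W"
    by (simp add: W_def sum_nonneg w_nonneg)
  show mean: "(\<Sum>k\<in>S. real k * w k) = \<mu> * W"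
  proof (cases "N = 0")
    case True
    then have "real k * w k = 0" for k
      using d_le w_support[of k] by (cases "k = 0") auto
    then have "(\<Sum>k\<in>S. real k * w k) = 0"
      by (intro sum.neutral) blast
    then show ?thesis
      using True by (simp add: \<mu>_def)
  next
    case False
    then show ?thesis
      using first by (simp add: \<mu>_def W_def field_simps)
  qed
  have factorial2: "(\<Sum>k\<in>S. real k * (real k - 1) * w k) \<le> \<mu>\<^sup>2 * W"
  proof (cases "d \<le> 1")
    case True
    then have "real k * (real k - 1) * w k = 0" for k
      using w_support[of k] by (cases "k \<le> 1") (auto simp: le_Suc_eq)
    then have "(\<Sum>k\<in>S. real k * (real k - 1) * w k) = 0"
      by (intro sum.neutral) blast
    then show ?thesis
      using W_nonneg by simp
  next
    case False
    then have N2: "2 \<le> real N" and d1: "1 \<le> real d"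
      using d_le by auto
    have "real d * real m \<le> real N * real m" "real N \<le> real d * real N"
      using d_le d1 N2 by (auto intro: mult_right_mono)
    \<comment> \<open>sampling without replacement: \<open>d (d - 1) m (m - 1) / (N (N - 1)) \<le> (m d / N)\<^sup>2\<close>\<close>
    then have "(real d - 1) * (real m - 1) * real N \<le> real m * real d * (real N - 1)"
      by (simp add: algebra_simps)
    then have "real d * real m * real N * ((real d - 1) * (real m - 1) * real N)
        \<le> real d * real m * real N * (real m * real d * (real N - 1))"
      by (intro mult_left_mono) auto
    then have "real d * (real d - 1) * (real m * (real m - 1)) * (real N)\<^sup>2
        \<le> (real m * real d)\<^sup>2 * (real N * (real N - 1))"
      by (simp add: power2_eq_square mult_ac)
    then have "real d * (real d - 1) * (real m * (real m - 1)) * (real N)\<^sup>2 * W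
        \<le> (real m * real d)\<^sup>2 * (real N * (real N - 1)) * W"
      by (rule mult_right_mono[OF _ W_nonneg])
    then have "real N * (real N - 1) * ((real N)\<^sup>2 * (\<Sum>k\<in>S. real k * (real k - 1) * w k))
        \<le> real N * (real N - 1) * ((real m * real d)\<^sup>2 * W)"
      using second unfolding W_def by (simp only: mult_ac)
    then have "(real N)\<^sup>2 * (\<Sum>k\<in>S. real k * (real k - 1) * w k) \<le> (real m * real d)\<^sup>2 * W"
      using N2 by (simp add: mult_le_cancel_left_pos)
    then show ?thesis
      using N2 by (simp add: \<mu>_def field_simps)
  qed
  have "(\<Sum>k\<in>S. (real k - \<mu>)\<^sup>2 * w k)
      = (\<Sum>k\<in>S. real k * (real k - 1) * w k) + (1 - 2 * \<mu>) * (\<Sum>k\<in>S. real k * w k) + \<mu>\<^sup>2 * W"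
    by (simp add: W_def power2_eq_square algebra_simps sum.distrib sum_subtractf
        sum_distrib_left)
  also have "\<dots> \<le> \<mu> * W"
    using factorial2 by (simp add: mean power2_eq_square algebra_simps)
  finally show "(\<Sum>k\<in>S. (real k - \<mu>)\<^sup>2 * w k) \<le> \<mu> * W" .
qed

lemma mult_abs_diff_le:
  fixes x \<mu> :: real
  assumes "0 \<le> \<mu>"
  shows "x * \<bar>\<mu> - x\<bar> \<le> (1 + sqrt \<mu> / 2) * (x - \<mu>)\<^sup>2 + \<mu> * sqrt \<mu> / 2"
proof -
  define s where "s = sqrt \<mu>"
  have s: "0 \<le> s" "s * s = \<mu>"
    using assms by (simp_all add: s_def)
  have "x * \<bar>\<mu> - x\<bar> = (x - \<mu>) * \<bar>x - \<mu>\<bar> + \<mu> * \<bar>x - \<mu>\<bar>"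
    by (simp add: algebra_simps abs_minus_commute)
  also have "(x - \<mu>) * \<bar>x - \<mu>\<bar> \<le> (x - \<mu>)\<^sup>2"
    by (simp add: power2_eq_square abs_if)
  also have "\<mu> * \<bar>x - \<mu>\<bar> \<le> s / 2 * (x - \<mu>)\<^sup>2 + \<mu> * s / 2"
  proof -
    have "0 \<le> s * (\<bar>x - \<mu>\<bar> - s)\<^sup>2"
      using s by simp
    then show ?thesis
      unfolding s(2)[symmetric] by (simp add: power2_eq_square algebra_simps)
  qed
  finally show ?thesis
    by (simp add: s_def algebra_simps)
qed

lemma sum_mult_abs_diff_le:
  fixes w :: "nat \<Rightarrow> real" and S :: "nat set"
  assumes "\<And>k. 0 \<le> w k" and "0 \<le> \<mu>"
    and variance: "(\<Sum>k\<in>S. (real k - \<mu>)\<^sup>2 * w k) \<le> \<mu> * (\<Sum>k\<in>S. w k)"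
  shows "(\<Sum>k\<in>S. real k * \<bar>\<mu> - real k\<bar> * w k) \<le> \<mu> * (1 + sqrt \<mu>) * (\<Sum>k\<in>S. w k)"
proof -
  have "(\<Sum>k\<in>S. real k * \<bar>\<mu> - real k\<bar> * w k)
      \<le> (\<Sum>k\<in>S. ((1 + sqrt \<mu> / 2) * (real k - \<mu>)\<^sup>2 + \<mu> * sqrt \<mu> / 2) * w k)"
    using assms mult_abs_diff_le by (intro sum_mono mult_right_mono) auto
  also have "\<dots> = (1 + sqrt \<mu> / 2) * (\<Sum>k\<in>S. (real k - \<mu>)\<^sup>2 * w k)
      + \<mu> * sqrt \<mu> / 2 * (\<Sum>k\<in>S. w k)"
    by (simp add: algebra_simps sum.distrib sum_distrib_left)
  also have "\<dots> \<le> (1 + sqrt \<mu> / 2) * (\<mu> * (\<Sum>k\<in>S. w k)) + \<mu> * sqrt \<mu> / 2 * (\<Sum>k\<in>S. w k)"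
    using variance assms(2) by (intro add_right_mono mult_left_mono) auto
  also have "\<dots> = \<mu> * (1 + sqrt \<mu>) * (\<Sum>k\<in>S. w k)"
    by (simp add: algebra_simps)
  finally show ?thesis .
qed

section \<open>Exchangeable random subsets\<close>

lemma measurable_count_space_if_real:
  fixes f :: "'a \<Rightarrow> nat"
  assumes "(\<lambda>x. real (f x)) \<in> borel_measurable M"
  shows "f \<in> measurable M (count_space UNIV)"
proof (subst measurable_count_space_eq2_countable, intro conjI ballI)
  fix a :: nat
  have "f -` {a} \<inter> space M = {x\<in>space M. real (f x) = real a}"
    by auto
  also have "\<dots> \<in> sets M"
    using assms by measurable
  finally show "f -` {a} \<inter> space M \<in> sets M" .
qed auto

lemma exists_bij_betw_image_eq:
  assumes "finite A" "F \<subseteq> A" "F' \<subseteq> A" "card F = card F'"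
  obtains \<sigma> where "bij_betw \<sigma> A A" "\<sigma> ` F = F'"
proof -
  have "finite F" "finite F'" "finite (A - F)" "finite (A - F')"
    using assms finite_subset by blast+
  moreover have "card (A - F) = card (A - F')"
    using assms by (simp add: card_Diff_subset finite_subset)
  ultimately obtain f g where f: "bij_betw f F F'" and g: "bij_betw g (A - F) (A - F')"
    using assms(4) finite_same_card_bij by metis
  have "bij_betw (\<lambda>x. if x \<in> F then f x else g x) (F \<union> (A - F)) (F' \<union> (A - F'))"
    by (rule bij_betw_disjoint_Un[OF f g]) auto
  moreover have "F \<union> (A - F) = A" "F' \<union> (A - F') = A"
    using assms by auto
  moreover have "(\<lambda>x. if x \<in> F then f x else g x) ` F = F'"
    using f by (simp add: bij_betw_def)
  ultimately show thesis
    using that by metis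
qed

locale iid_random_subset =
  fixes M :: "'a measure" and I A T :: "'i set" and P :: "'a \<Rightarrow> bool"
  assumes prob_space_M: "prob_space M"
    and P_measurable [measurable]: "Measurable.pred M P"
    and finite_A: "finite A" and A_subset: "A \<subseteq> I" and T_subset: "T \<subseteq> A"
begin

abbreviation \<Omega> :: "('i \<Rightarrow> 'a) measure" where
  "\<Omega> \<equiv> \<Pi>\<^sub>M i\<in>I. M"

definition K :: "('i \<Rightarrow> 'a) \<Rightarrow> 'i set" where
  "K \<omega> = {i\<in>A. P (\<omega> i)}"

definition N :: "('i \<Rightarrow> 'a) \<Rightarrow> nat" where
  "N \<omega> = card (K \<omega>)"

definition D :: "('i \<Rightarrow> 'a) \<Rightarrow> nat" where
  "D \<omega> = card (K \<omega> \<inter> T)"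

lemma prob_space_\<Omega>: "prob_space \<Omega>"
  using prob_space_M by (intro prob_space_PiM)

lemma finite_K: "finite (K \<omega>)"
  using finite_A by (simp add: K_def)

lemma N_le: "N \<omega> \<le> card A"
  using finite_A by (auto simp: N_def K_def intro!: card_mono)

lemma D_le_card_T: "D \<omega> \<le> card T"
  using finite_A T_subset by (auto simp: D_def intro!: card_mono dest: finite_subset)

lemma D_le_N: "D \<omega> \<le> N \<omega>"
  using finite_K by (auto simp: D_def N_def intro!: card_mono)

lemma K_subset: "K \<omega> \<subseteq> A"
  by (auto simp: K_def)

lemma measurable_card_K_Int:
  assumes "B \<subseteq> A"
  shows "(\<lambda>\<omega>. card (K \<omega> \<inter> B)) \<in> measurable \<Omega> (count_space UNIV)"
proof (rule measurable_count_space_if_real)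
  have "finite B"
    using assms finite_A finite_subset by blast
  moreover have "K \<omega> \<inter> B = B \<inter> {i. P (\<omega> i)}" for \<omega>
    using assms by (auto simp: K_def)
  ultimately have "real (card (K \<omega> \<inter> B)) = (\<Sum>i\<in>B. if P (\<omega> i) then 1 else 0)" for \<omega>
    by (simp add: sum.If_cases)
  moreover have "(\<lambda>\<omega>. \<Sum>i\<in>B. if P (\<omega> i) then 1 else 0 :: real) \<in> borel_measurable \<Omega>"
    using assms A_subset by (intro borel_measurable_sum) auto
  ultimately show "(\<lambda>\<omega>. real (card (K \<omega> \<inter> B))) \<in> borel_measurable \<Omega>"
    by simp
qed

lemma measurable_N [measurable]: "N \<in> measurable \<Omega> (count_space UNIV)"
  using measurable_card_K_Int[of A] K_subset by (simp add: N_def[abs_def] Int_absorb2)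

lemma measurable_D [measurable]: "D \<in> measurable \<Omega> (count_space UNIV)"
  using measurable_card_K_Int[OF T_subset] by (simp add: D_def[abs_def])

lemma sets_subset_K:
  assumes "F \<subseteq> A"
  shows "{\<omega>\<in>space \<Omega>. F \<subseteq> K \<omega> \<and> N \<omega> = m} \<in> sets \<Omega>"
proof -
  have "finite F"
    using assms finite_A finite_subset by blast
  then have [measurable]: "Measurable.pred \<Omega> (\<lambda>\<omega>. \<forall>i\<in>F. P (\<omega> i))"
    using assms A_subset by (intro pred_intros_finite) auto
  have "F \<subseteq> K \<omega> \<longleftrightarrow> (\<forall>i\<in>F. P (\<omega> i))" for \<omega>
    using assms by (auto simp: K_def)
  then show ?thesis
    by simp
qed
text \<open>Exchangeability: relabelling the coordinates by a bijection of \<open>A\<close> preserves the product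
  measure.\<close>

lemma measure_subset_K_eq:
  assumes F: "F \<subseteq> A" and F': "F' \<subseteq> A" and card_eq: "card F = card F'"
  shows "measure \<Omega> {\<omega>\<in>space \<Omega>. F \<subseteq> K \<omega> \<and> N \<omega> = m}
       = measure \<Omega> {\<omega>\<in>space \<Omega>. F' \<subseteq> K \<omega> \<and> N \<omega> = m}"
proof -
  obtain \<sigma> where \<sigma>: "bij_betw \<sigma> A A" "\<sigma> ` F = F'"
    using exists_bij_betw_image_eq[OF finite_A F F' card_eq] .
  define \<tau> where "\<tau> i = (if i \<in> A then \<sigma> i else i)" for i
  define \<phi> where "\<phi> \<omega> = (\<lambda>i\<in>I. \<omega> (\<tau> i))" for \<omega> :: "'i \<Rightarrow> 'a"
  have \<tau>_A: "\<tau> i \<in> A \<longleftrightarrow> i \<in> A" for i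
    using \<sigma>(1) by (auto simp: \<tau>_def bij_betw_def)
  have inj_\<tau>: "inj \<tau>"
    using \<sigma>(1) by (auto simp: \<tau>_def bij_betw_def inj_on_def intro!: injI)
  have \<tau>_I: "\<tau> i \<in> I" if "i \<in> I" for i
    using that \<tau>_A[of i] A_subset by (cases "i \<in> A") (auto simp: \<tau>_def)
  have inj_on_\<tau>: "inj_on \<tau> I"
    using inj_\<tau> by (rule inj_on_subset) simp
  have distr_\<phi>: "distr \<Omega> \<Omega> \<phi> = \<Omega>"
    unfolding \<phi>_def using prob_space_M inj_on_\<tau> \<tau>_I by (intro distr_PiM_reindex) auto
  have \<phi>_measurable: "\<phi> \<in> measurable \<Omega> \<Omega>"
    unfolding \<phi>_def by measurable (rule \<tau>_I)
  have K_\<phi>: "\<tau> ` K (\<phi> \<omega>) = K \<omega>" for \<omega>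
  proof -
    have "K (\<phi> \<omega>) = {i\<in>A. P (\<omega> (\<tau> i))}"
      using A_subset by (auto simp: K_def \<phi>_def)
    moreover have "\<tau> ` A = A"
      using \<sigma>(1) by (auto simp: \<tau>_def bij_betw_def)
    ultimately show ?thesis
      by (auto simp: K_def \<tau>_A)
  qed
  have "\<phi> -` {\<omega>\<in>space \<Omega>. F \<subseteq> K \<omega> \<and> N \<omega> = m} \<inter> space \<Omega>
      = {\<omega>\<in>space \<Omega>. F' \<subseteq> K \<omega> \<and> N \<omega> = m}"
  proof -
    have "\<tau> ` F = F'"
      using \<sigma>(2) F by (auto simp: \<tau>_def)
    then have "F \<subseteq> K (\<phi> \<omega>) \<longleftrightarrow> F' \<subseteq> K \<omega>" for \<omega>
      using K_\<phi>[of \<omega>] inj_\<tau> by (metis inj_image_subset_iff)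
    moreover have "N (\<phi> \<omega>) = N \<omega>" for \<omega>
      using K_\<phi>[of \<omega>] inj_\<tau> by (metis N_def card_image inj_on_subset subset_UNIV)
    ultimately show ?thesis
      using measurable_space[OF \<phi>_measurable] by auto
  qed
  then show ?thesis
    using measure_distr[OF \<phi>_measurable sets_subset_K[OF F], of m] by (simp add: distr_\<phi>)
qed

definition prob_N :: "nat \<Rightarrow> real" where
  "prob_N m = measure \<Omega> {\<omega>\<in>space \<Omega>. N \<omega> = m}"

definition prob_ND :: "nat \<Rightarrow> nat \<Rightarrow> real" where
  "prob_ND m k = measure \<Omega> {\<omega>\<in>space \<Omega>. N \<omega> = m \<and> D \<omega> = k}"

lemma prob_ND_nonneg: "0 \<le> prob_ND m k"
  by (simp add: prob_ND_def)

lemma prob_ND_eq_0: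
  assumes "card A < m \<or> card T < k"
  shows "prob_ND m k = 0"
proof -
  have "N \<omega> \<noteq> m \<or> D \<omega> \<noteq> k" for \<omega>
    using assms N_le[of \<omega>] D_le_card_T[of \<omega>] by linarith
  then have "{\<omega>\<in>space \<Omega>. N \<omega> = m \<and> D \<omega> = k} = {}"
    by blast
  then show ?thesis
    unfolding prob_ND_def by (simp only: measure_empty)
qed

lemma integral_fun_N_D:
  fixes h :: "nat \<Rightarrow> nat \<Rightarrow> real"
  shows "integrable \<Omega> (\<lambda>\<omega>. h (N \<omega>) (D \<omega>))"
    and "(\<integral>\<omega>. h (N \<omega>) (D \<omega>) \<partial>\<Omega>) = (\<Sum>m\<le>card A. \<Sum>k\<le>card A. h m k * prob_ND m k)"
proof -
  interpret prob_space \<Omega>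
    by (rule prob_space_\<Omega>)
  define S where "S m k = {\<omega>\<in>space \<Omega>. N \<omega> = m \<and> D \<omega> = k}" for m k
  have S_sets: "S m k \<in> sets \<Omega>" for m k
    by (simp add: S_def)
  have decomp: "h (N \<omega>) (D \<omega>) = (\<Sum>m\<le>card A. \<Sum>k\<le>card A. h m k * indicator (S m k) \<omega>)"
    if "\<omega> \<in> space \<Omega>" for \<omega>
  proof -
    have "(\<Sum>m\<le>card A. \<Sum>k\<le>card A. h m k * indicator (S m k) \<omega>)
        = (\<Sum>m\<le>card A. if m = N \<omega> then \<Sum>k\<le>card A. if k = D \<omega> then h m k else 0 else 0)"
      using that by (intro sum.cong) (auto simp: S_def indicator_def)
    then show ?thesis
      using N_le[of \<omega>] D_le_N[of \<omega>] by simp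
  qed
  have integrable_S: "integrable \<Omega> (\<lambda>\<omega>. h m k * indicator (S m k) \<omega>)" for m k
    using S_sets emeasure_finite
    by (intro integrable_mult_right integrable_real_indicator) (auto simp: less_top[symmetric])
  have "integrable \<Omega> (\<lambda>\<omega>. \<Sum>m\<le>card A. \<Sum>k\<le>card A. h m k * indicator (S m k) \<omega>)"
    using integrable_S by (intro Bochner_Integration.integrable_sum) auto
  moreover have "integrable \<Omega> (\<lambda>\<omega>. h (N \<omega>) (D \<omega>))
      \<longleftrightarrow> integrable \<Omega> (\<lambda>\<omega>. \<Sum>m\<le>card A. \<Sum>k\<le>card A. h m k * indicator (S m k) \<omega>)"
    by (rule Bochner_Integration.integrable_cong[OF refl decomp])
  ultimately show "integrable \<Omega> (\<lambda>\<omega>. h (N \<omega>) (D \<omega>))"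
    by blast
  have "(\<integral>\<omega>. h (N \<omega>) (D \<omega>) \<partial>\<Omega>)
      = (\<integral>\<omega>. (\<Sum>m\<le>card A. \<Sum>k\<le>card A. h m k * indicator (S m k) \<omega>) \<partial>\<Omega>)"
    by (rule Bochner_Integration.integral_cong[OF refl decomp])
  also have "\<dots> = (\<Sum>m\<le>card A. \<integral>\<omega>. (\<Sum>k\<le>card A. h m k * indicator (S m k) \<omega>) \<partial>\<Omega>)"
    by (intro Bochner_Integration.integral_sum Bochner_Integration.integrable_sum integrable_S)
  also have "\<dots> = (\<Sum>m\<le>card A. \<Sum>k\<le>card A. \<integral>\<omega>. h m k * indicator (S m k) \<omega> \<partial>\<Omega>)"
    by (intro sum.cong refl Bochner_Integration.integral_sum integrable_S)
  also have "\<dots> = (\<Sum>m\<le>card A. \<Sum>k\<le>card A. h m k * prob_ND m k)"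
    using S_sets by (simp add: prob_ND_def S_def)
  finally show "(\<integral>\<omega>. h (N \<omega>) (D \<omega>) \<partial>\<Omega>) = (\<Sum>m\<le>card A. \<Sum>k\<le>card A. h m k * prob_ND m k)" .
qed

lemma integral_indicator_N_fun_D:
  fixes h :: "nat \<Rightarrow> real"
  shows "(\<integral>\<omega>. indicator {\<omega>\<in>space \<Omega>. N \<omega> = m} \<omega> * h (D \<omega>) \<partial>\<Omega>) = (\<Sum>k\<le>card A. h k * prob_ND m k)"
proof -
  have "(\<integral>\<omega>. indicator {\<omega>\<in>space \<Omega>. N \<omega> = m} \<omega> * h (D \<omega>) \<partial>\<Omega>)
      = (\<integral>\<omega>. (if N \<omega> = m then 1 else 0) * h (D \<omega>) \<partial>\<Omega>)"
    by (intro Bochner_Integration.integral_cong) (auto simp: indicator_def)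
  also have "\<dots> = (\<Sum>m'\<le>card A. \<Sum>k\<le>card A. (if m' = m then 1 else 0) * h k * prob_ND m' k)"
    by (rule integral_fun_N_D(2))
  also have "\<dots> = (\<Sum>m'\<le>card A. if m' = m then \<Sum>k\<le>card A. h k * prob_ND m k else 0)"
    by (intro sum.cong) auto
  also have "\<dots> = (\<Sum>k\<le>card A. h k * prob_ND m k)"
    using prob_ND_eq_0[of m] by (cases "m \<le> card A") auto
  finally show ?thesis .
qed

lemma prob_N_eq_sum: "prob_N m = (\<Sum>k\<le>card A. prob_ND m k)"
proof -
  interpret prob_space \<Omega>
    by (rule prob_space_\<Omega>)
  show ?thesis
    using integral_indicator_N_fun_D[of m "\<lambda>_. 1"] by (simp add: prob_N_def)
qed

lemma sum_prob_N: "(\<Sum>m\<le>card A. prob_N m) = 1"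
proof -
  interpret prob_space \<Omega>
    by (rule prob_space_\<Omega>)
  show ?thesis
    using integral_fun_N_D(2)[of "\<lambda>_ _. 1"] by (simp add: prob_N_eq_sum prob_space)
qed

lemma integral_choose_card_K_Int:
  assumes B: "B \<subseteq> A" and F0: "F0 \<subseteq> A" "card F0 = r"
  shows "(\<integral>\<omega>. indicator {\<omega>\<in>space \<Omega>. N \<omega> = m} \<omega> * real (card (K \<omega> \<inter> B) choose r) \<partial>\<Omega>)
    = real (card B choose r) * measure \<Omega> {\<omega>\<in>space \<Omega>. F0 \<subseteq> K \<omega> \<and> N \<omega> = m}"
proof -
  interpret prob_space \<Omega>
    by (rule prob_space_\<Omega>)
  define Sub where "Sub = {F. F \<subseteq> B \<and> card F = r}"
  define E where "E F = {\<omega>\<in>space \<Omega>. F \<subseteq> K \<omega> \<and> N \<omega> = m}" for F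
  have finite_B: "finite B"
    using B finite_A finite_subset by blast
  have E_sets: "F \<in> Sub \<Longrightarrow> E F \<in> sets \<Omega>" for F
    using B by (auto simp: Sub_def E_def intro!: sets_subset_K)
  have "indicator {\<omega>\<in>space \<Omega>. N \<omega> = m} \<omega> * real (card (K \<omega> \<inter> B) choose r)
      = (\<Sum>F\<in>Sub. indicator (E F) \<omega>)" if "\<omega> \<in> space \<Omega>" for \<omega>
  proof -
    have "{F\<in>Sub. F \<subseteq> K \<omega>} = {F. F \<subseteq> K \<omega> \<inter> B \<and> card F = r}"
      by (auto simp: Sub_def)
    then have "card {F\<in>Sub. F \<subseteq> K \<omega>} = card (K \<omega> \<inter> B) choose r"
      using n_subsets[of "K \<omega> \<inter> B" r] finite_K[of \<omega>] by simp
    moreover have "finite Sub"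
      using finite_B by (simp add: Sub_def)
    ultimately show ?thesis
      using that by (simp add: E_def indicator_def sum.If_cases Int_def)
  qed
  then have "(\<integral>\<omega>. indicator {\<omega>\<in>space \<Omega>. N \<omega> = m} \<omega> * real (card (K \<omega> \<inter> B) choose r) \<partial>\<Omega>)
      = (\<integral>\<omega>. (\<Sum>F\<in>Sub. indicator (E F) \<omega>) \<partial>\<Omega>)"
    by (intro Bochner_Integration.integral_cong) simp_all
  also have "\<dots> = (\<Sum>F\<in>Sub. measure \<Omega> (E F))"
    using E_sets emeasure_finite
    by (simp add: Bochner_Integration.integral_sum less_top[symmetric])
  also have "\<dots> = (\<Sum>F\<in>Sub. measure \<Omega> (E F0))"
    using B F0 by (intro sum.cong refl) (auto simp: Sub_def E_def intro!: measure_subset_K_eq)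
  also have "\<dots> = real (card B choose r) * measure \<Omega> (E F0)"
    using finite_B by (simp add: Sub_def n_subsets)
  finally show ?thesis
    by (simp add: E_def)
qed

lemma factorial_moment_D:
  "real (card A choose r) * (\<Sum>k\<le>card A. real (k choose r) * prob_ND m k)
    = real (card T choose r) * real (m choose r) * prob_N m"
proof (cases "r \<le> card A")
  case True
  then obtain F0 where F0: "F0 \<subseteq> A" "card F0 = r"
    by (meson obtain_subset_with_card_n)
  define q where "q = measure \<Omega> {\<omega>\<in>space \<Omega>. F0 \<subseteq> K \<omega> \<and> N \<omega> = m}"
  have "(\<Sum>k\<le>card A. real (k choose r) * prob_ND m k) = real (card T choose r) * q"
    using integral_choose_card_K_Int[OF T_subset F0, of m] integral_indicator_N_fun_D[of m "\<lambda>k. real (k choose r)"]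
    by (simp add: q_def D_def)
  moreover have "real (m choose r) * prob_N m = real (card A choose r) * q"
  proof -
    have "(\<integral>\<omega>. indicator {\<omega>\<in>space \<Omega>. N \<omega> = m} \<omega> * real (card (K \<omega> \<inter> A) choose r) \<partial>\<Omega>)
        = (\<integral>\<omega>. real (m choose r) * indicator {\<omega>\<in>space \<Omega>. N \<omega> = m} \<omega> \<partial>\<Omega>)"
      using K_subset by (intro Bochner_Integration.integral_cong) (auto simp: indicator_def N_def Int_absorb2)
    then show ?thesis
      using integral_choose_card_K_Int[OF order_refl F0, of m] by (simp add: q_def prob_N_def)
  qed
  ultimately show ?thesis
    by simp
next
  case False
  then show ?thesis
    using card_mono[OF finite_A T_subset] by (simp add: binomial_eq_0)
qed

definition cond_mean_D :: "nat \<Rightarrow> real" where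
  "cond_mean_D m = real m * real (card T) / real (card A)"

lemma cond_mean_D_nonneg: "0 \<le> cond_mean_D m"
  by (simp add: cond_mean_D_def)

lemma cond_mean_D_le: "m \<le> card A \<Longrightarrow> cond_mean_D m \<le> real (card T)"
  by (cases "card A = 0") (auto simp: cond_mean_D_def field_simps mult_right_mono)

lemma hypergeometric_moments_D:
  assumes "m \<le> card A"
  shows "(\<Sum>k\<le>card A. real k * prob_ND m k) = cond_mean_D m * prob_N m"
    and "(\<Sum>k\<le>card A. (real k - cond_mean_D m)\<^sup>2 * prob_ND m k) \<le> cond_mean_D m * prob_N m"
proof -
  have first: "real (card A) * (\<Sum>k\<le>card A. real k * prob_ND m k)
      = real (card T) * real m * (\<Sum>k\<le>card A. prob_ND m k)"
    using factorial_moment_D[of 1 m] by (simp add: prob_N_eq_sum)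
  have "real (card A) * (real (card A) - 1) * (\<Sum>k\<le>card A. real k * (real k - 1) * prob_ND m k)
      = 4 * (real (card A choose 2) * (\<Sum>k\<le>card A. real (k choose 2) * prob_ND m k))"
    by (simp add: real_choose_two[symmetric] sum_distrib_left mult_ac)
  also have "\<dots> = real (card T) * (real (card T) - 1) * (real m * (real m - 1)) * (\<Sum>k\<le>card A. prob_ND m k)"
    by (simp add: factorial_moment_D prob_N_eq_sum real_choose_two[symmetric])
  finally have second: "real (card A) * (real (card A) - 1) * (\<Sum>k\<le>card A. real k * (real k - 1) * prob_ND m k)
      = real (card T) * (real (card T) - 1) * (real m * (real m - 1)) * (\<Sum>k\<le>card A. prob_ND m k)" .
  have "card T \<le> card A"
    using finite_A T_subset by (rule card_mono)
  moreover have "prob_ND m k = 0" if "card T < k" for k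
    using that by (simp add: prob_ND_eq_0)
  ultimately have moments:
    "(\<Sum>k\<le>card A. real k * prob_ND m k) = cond_mean_D m * (\<Sum>k\<le>card A. prob_ND m k)"
    "(\<Sum>k\<le>card A. (real k - cond_mean_D m)\<^sup>2 * prob_ND m k)
      \<le> cond_mean_D m * (\<Sum>k\<le>card A. prob_ND m k)"
    using hypergeometric_mean_variance[OF prob_ND_nonneg _ _ assms first second]
    by (simp_all add: cond_mean_D_def mult.commute)
  show "(\<Sum>k\<le>card A. real k * prob_ND m k) = cond_mean_D m * prob_N m"
    using moments(1) by (simp add: prob_N_eq_sum)
  show "(\<Sum>k\<le>card A. (real k - cond_mean_D m)\<^sup>2 * prob_ND m k) \<le> cond_mean_D m * prob_N m"
    using moments(2) by (simp add: prob_N_eq_sum)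
qed

end

section \<open>The censored trial under the null hypothesis\<close>

lemma measurable_realC:
  assumes "sets G = sets (borel \<Otimes>\<^sub>M borel)"
  shows "realC \<in> borel_measurable (measure_pmf (bernoulli_pmf p) \<Otimes>\<^sub>M G)"
proof -
  have "fst \<in> measurable (measure_pmf (bernoulli_pmf p) \<Otimes>\<^sub>M G) (count_space UNIV)"
    using measurable_fst[of "measure_pmf (bernoulli_pmf p)" G]
    by (simp add: measurable_cong_sets[OF refl sets_measure_pmf_count_space])
  moreover have "fst \<in> borel_measurable G" "snd \<in> borel_measurable G"
    unfolding measurable_cong_sets[OF assms refl] by simp_all
  then have "(\<lambda>u. fst (snd u)) \<in> borel_measurable (measure_pmf (bernoulli_pmf p) \<Otimes>\<^sub>M G)"
    "(\<lambda>u. snd (snd u)) \<in> borel_measurable (measure_pmf (bernoulli_pmf p) \<Otimes>\<^sub>M G)"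
    by (auto intro: measurable_compose[OF measurable_snd])
  ultimately show ?thesis
    unfolding realC_def[abs_def] by (intro measurable_If) (auto simp: Measurable.pred_def)
qed

locale censored_trial =
  fixes n :: nat and p :: real and G :: "(ennreal \<times> ennreal) measure"
    and t :: "nat \<Rightarrow> real" and v :: real
  assumes G_prob: "prob_space G" and G_sets: "sets G = sets (borel \<Otimes>\<^sub>M borel)"
    and v_nonneg: "0 \<le> v" and t_nonneg: "\<And>i. i < n \<Longrightarrow> 0 \<le> t i"
begin

abbreviation risk_set :: "nat set" where
  "risk_set \<equiv> {i. i < n \<and> v \<le> t i}"

abbreviation tie_set :: "nat set" where
  "tie_set \<equiv> {i. i < n \<and> t i = v}"

end

text \<open>Under the null hypothesis the event time of unit \<open>i\<close> is \<open>t i\<close> whatever its treatment, so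
  unit \<open>i\<close> is at risk at \<open>v\<close> iff \<open>v \<le> t i\<close> and \<open>v \<le> C\<^sub>i\<close>, and it then has an event at \<open>v\<close>
  iff \<open>t i = v\<close>: the paper's \<open>N\<^sub>k\<close> and \<open>D\<^sub>k\<close> become \<open>N\<close> and \<open>D\<close> below.\<close>

sublocale censored_trial \<subseteq> iid_random_subset "measure_pmf (bernoulli_pmf p) \<Otimes>\<^sub>M G" "{..<n}"
  risk_set tie_set "\<lambda>u. ennreal v \<le> realC u"
proof (rule iid_random_subset.intro)
  show "prob_space (measure_pmf (bernoulli_pmf p) \<Otimes>\<^sub>M G)"
    using G_prob by (intro prob_space_pair) (auto simp: prob_space_measure_pmf)
  have [measurable]: "realC \<in> borel_measurable (measure_pmf (bernoulli_pmf p) \<Otimes>\<^sub>M G)"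
    using G_sets by (rule measurable_realC)
  show "Measurable.pred (measure_pmf (bernoulli_pmf p) \<Otimes>\<^sub>M G) (\<lambda>u. ennreal v \<le> realC u)"
    by measurable
qed auto

context censored_trial
begin

lemma trial_space_eq: "trial_space n p G = \<Omega>"
  by (simp add: trial_space_def)

lemma atRisk_eq: "atRisk n t v \<omega> = real (N \<omega>)"
proof -
  have "{i. i < n \<and> ennreal v \<le> obsW t i \<omega>} = K \<omega>"
    using t_nonneg v_nonneg by (auto simp: obsW_def K_def)
  then show ?thesis
    by (simp add: atRisk_def N_def)
qed

lemma events_eq: "events n t v \<omega> = real (D \<omega>)"
proof -
  have "{i. i < n \<and> obsDelta t i \<omega> \<and> obsW t i \<omega> = ennreal v} = K \<omega> \<inter> tie_set"
    using t_nonneg v_nonneg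
    by (auto simp: obsDelta_def obsW_def K_def min_absorb1)
  then show ?thesis
    by (simp add: events_def D_def)
qed

lemma atRiskTrt_le_atRisk: "atRiskTrt n t v \<omega> \<le> atRisk n t v \<omega>"
  unfolding atRiskTrt_def atRisk_def by (auto intro!: card_mono)

lemma condExpDisc_atRisk:
  "condExpDisc \<Omega> X (atRisk n t v) \<omega>
    = (\<integral>\<omega>'. indicator {\<omega>'\<in>space \<Omega>. N \<omega>' = N \<omega>} \<omega>' * X \<omega>' \<partial>\<Omega>) / prob_N (N \<omega>)"
  by (simp add: condExpDisc_def atRisk_eq prob_N_def)

lemma condExpDisc_atRisk_minus_events:
  assumes "prob_N (N \<omega>) \<noteq> 0"
  shows "condExpDisc \<Omega> (\<lambda>\<omega>'. atRisk n t v \<omega>' - events n t v \<omega>') (atRisk n t v) \<omega>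
    = real (N \<omega>) - cond_mean_D (N \<omega>)"
proof -
  have "(\<integral>\<omega>'. indicator {\<omega>'\<in>space \<Omega>. N \<omega>' = N \<omega>} \<omega>' * (atRisk n t v \<omega>' - events n t v \<omega>') \<partial>\<Omega>)
      = (\<integral>\<omega>'. indicator {\<omega>'\<in>space \<Omega>. N \<omega>' = N \<omega>} \<omega>' * (real (N \<omega>) - real (D \<omega>')) \<partial>\<Omega>)"
    by (intro Bochner_Integration.integral_cong) (auto simp: atRisk_eq events_eq indicator_def)
  also have "\<dots> = (\<Sum>k\<le>card risk_set. (real (N \<omega>) - real k) * prob_ND (N \<omega>) k)"
    by (rule integral_indicator_N_fun_D)
  also have "\<dots> = real (N \<omega>) * prob_N (N \<omega>) - cond_mean_D (N \<omega>) * prob_N (N \<omega>)"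
    using hypergeometric_moments_D(1)[OF N_le]
    by (simp add: left_diff_distrib sum_subtractf sum_distrib_left prob_N_eq_sum)
  finally show ?thesis
    using assms by (simp add: condExpDisc_atRisk field_simps)
qed

lemma condExpDisc_atRiskTrt_product_bounds:
  fixes \<omega> :: "nat \<Rightarrow> bool \<times> ennreal \<times> ennreal"
  defines "ce \<equiv> condExpDisc \<Omega> (\<lambda>\<omega>'. atRiskTrt n t v \<omega>' * (atRisk n t v \<omega>' - atRiskTrt n t v \<omega>'))
    (atRisk n t v) \<omega>"
  shows "0 \<le> ce" and "ce \<le> (real (N \<omega>))\<^sup>2 / 4"
proof -
  interpret prob_space \<Omega>
    by (rule prob_space_\<Omega>)
  define E where "E = {\<omega>'\<in>space \<Omega>. N \<omega>' = N \<omega>}"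
  define f where "f \<omega>' = indicator E \<omega>' * (atRiskTrt n t v \<omega>' * (atRisk n t v \<omega>' - atRiskTrt n t v \<omega>'))"
    for \<omega>'
  have f_bounds: "0 \<le> f \<omega>' \<and> f \<omega>' \<le> (real (N \<omega>))\<^sup>2 / 4 * indicator E \<omega>'" for \<omega>'
  proof (cases "\<omega>' \<in> E")
    case True
    define a where "a = atRiskTrt n t v \<omega>'"
    have "0 \<le> a" "a \<le> real (N \<omega>)"
      using True atRiskTrt_le_atRisk[of \<omega>'] by (auto simp: a_def E_def atRiskTrt_def atRisk_eq)
    moreover have "a * (real (N \<omega>) - a) \<le> (real (N \<omega>))\<^sup>2 / 4"
      using zero_le_power2[of "real (N \<omega>) - 2 * a"] by (simp add: power2_eq_square algebra_simps)
    ultimately show ?thesis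
      using True by (simp add: f_def a_def[symmetric] E_def atRisk_eq)
  qed (simp add: f_def)
  have "0 \<le> (\<integral>\<omega>'. f \<omega>' \<partial>\<Omega>)"
    using f_bounds by (intro Bochner_Integration.integral_nonneg) auto
  \<comment> \<open>no measurability of \<open>f\<close> is needed: \<open>integral_mono'\<close> only asks for an integrable majorant\<close>
  moreover have "(\<integral>\<omega>'. f \<omega>' \<partial>\<Omega>) \<le> (\<integral>\<omega>'. (real (N \<omega>))\<^sup>2 / 4 * indicator E \<omega>' \<partial>\<Omega>)"
    using f_bounds emeasure_finite
    by (intro integral_mono') (auto simp: E_def less_top[symmetric])
  moreover have "(\<integral>\<omega>'. (real (N \<omega>))\<^sup>2 / 4 * indicator E \<omega>' \<partial>\<Omega>) = (real (N \<omega>))\<^sup>2 / 4 * prob_N (N \<omega>)"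
    by (simp add: E_def prob_N_def)
  moreover have "ce = (\<integral>\<omega>'. f \<omega>' \<partial>\<Omega>) / prob_N (N \<omega>)"
    by (simp add: ce_def condExpDisc_atRisk f_def E_def)
  moreover have "0 \<le> prob_N (N \<omega>)"
    by (simp add: prob_N_def)
  ultimately show "0 \<le> ce" "ce \<le> (real (N \<omega>))\<^sup>2 / 4"
    by (auto simp: divide_le_eq)
qed

definition xi2_majorant :: "nat \<Rightarrow> nat \<Rightarrow> real" where
  "xi2_majorant m k =
     (if 2 \<le> m then real k * \<bar>cond_mean_D m - real k\<bar> / (4 * (real m - 1)) else 0)"

lemma xi2_majorant_nonneg: "0 \<le> xi2_majorant m k"
  by (simp add: xi2_majorant_def)

lemma abs_xi2_le_majorant: "\<bar>xi2 \<Omega> n t v \<omega>\<bar> \<le> xi2_majorant (N \<omega>) (D \<omega>)"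
proof -
  define m where "m = N \<omega>"
  define ce1 where "ce1 = condExpDisc \<Omega>
    (\<lambda>\<omega>'. atRiskTrt n t v \<omega>' * (atRisk n t v \<omega>' - atRiskTrt n t v \<omega>')) (atRisk n t v) \<omega>"
  define ce2 where "ce2 = condExpDisc \<Omega> (\<lambda>\<omega>'. atRisk n t v \<omega>' - events n t v \<omega>') (atRisk n t v) \<omega>"
  have xi2_eq: "xi2 \<Omega> n t v \<omega>
      = real (D \<omega>) * ce1 / ((real m)\<^sup>2 * (real m - 1)) * ((real m - real (D \<omega>)) - ce2)"
    by (simp add: xi2_def ce1_def ce2_def atRisk_eq events_eq m_def)
  show ?thesis
  proof (cases "2 \<le> m \<and> prob_N m \<noteq> 0")
    case True
    have "ce2 = real m - cond_mean_D m"
      using True condExpDisc_atRisk_minus_events by (simp add: ce2_def m_def)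
    then have "\<bar>xi2 \<Omega> n t v \<omega>\<bar>
        = real (D \<omega>) * ce1 / ((real m)\<^sup>2 * (real m - 1)) * \<bar>cond_mean_D m - real (D \<omega>)\<bar>"
      using True condExpDisc_atRiskTrt_product_bounds(1)[of \<omega>]
      by (simp add: xi2_eq abs_mult ce1_def m_def)
    also have "\<dots> \<le> real (D \<omega>) * ((real m)\<^sup>2 / 4) / ((real m)\<^sup>2 * (real m - 1))
        * \<bar>cond_mean_D m - real (D \<omega>)\<bar>"
      using True condExpDisc_atRiskTrt_product_bounds(2)[of \<omega>]
      by (intro mult_right_mono divide_right_mono mult_left_mono) (auto simp: ce1_def m_def)
    also have "\<dots> = xi2_majorant m (D \<omega>)"
      using True by (simp add: xi2_majorant_def field_simps power2_eq_square)
    finally show ?thesis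
      by (simp add: m_def)
  next
    case False
    \<comment> \<open>\<open>m = 0\<close> forces \<open>D = 0\<close>; otherwise \<open>xi2\<close> or \<open>ce1\<close> divides by \<open>0\<close>, and \<open>x / 0 = 0\<close>.\<close>
    then consider "m = 0" | "m = 1" | "prob_N m = 0"
      by linarith
    then have "xi2 \<Omega> n t v \<omega> = 0"
    proof cases
      case 1
      then show ?thesis
        using D_le_N[of \<omega>] by (simp add: xi2_eq m_def)
    next
      case 3
      then show ?thesis
        by (simp add: xi2_eq ce1_def condExpDisc_atRisk m_def)
    qed (simp add: xi2_eq)
    then show ?thesis
      by (simp add: xi2_majorant_nonneg)
  qed
qed

lemma sum_xi2_majorant_le:
  assumes "1 \<le> card tie_set" and m: "m \<le> card risk_set"
  shows "(\<Sum>k\<le>card risk_set. xi2_majorant m k * prob_ND m k)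
    \<le> real (card tie_set) / real (card risk_set) * sqrt (real (card tie_set)) * prob_N m"
proof (cases "2 \<le> m")
  case True
  define d where "d = real (card tie_set)"
  define \<mu> where "\<mu> = cond_mean_D m"
  have d: "1 \<le> d"
    using assms(1) by (simp add: d_def)
  have \<mu>: "0 \<le> \<mu>" "\<mu> \<le> d"
    using cond_mean_D_nonneg cond_mean_D_le[OF m] by (simp_all add: \<mu>_def d_def)
  have "(\<Sum>k\<le>card risk_set. xi2_majorant m k * prob_ND m k)
      = (\<Sum>k\<le>card risk_set. real k * \<bar>\<mu> - real k\<bar> * prob_ND m k) / (4 * (real m - 1))"
    using True by (simp add: xi2_majorant_def \<mu>_def sum_divide_distrib)
  also have "\<dots> \<le> \<mu> * (1 + sqrt \<mu>) * prob_N m / (4 * (real m - 1))"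
  proof -
    have "(\<Sum>k\<le>card risk_set. real k * \<bar>\<mu> - real k\<bar> * prob_ND m k) \<le> \<mu> * (1 + sqrt \<mu>) * prob_N m"
      unfolding prob_N_eq_sum using hypergeometric_moments_D(2)[OF m]
      by (intro sum_mult_abs_diff_le prob_ND_nonneg \<mu>(1)) (simp add: \<mu>_def prob_N_eq_sum)
    then show ?thesis
      using True by (intro divide_right_mono) auto
  qed
  also have "\<dots> = d / real (card risk_set) * (real m / (2 * (real m - 1)))
      * ((1 + sqrt \<mu>) / 2) * prob_N m"
  proof -
    have \<mu>_eq: "\<mu> = d / real (card risk_set) * real m"
      by (simp add: \<mu>_def cond_mean_D_def d_def)
    show ?thesis
      using True by (subst (1) \<mu>_eq) (simp add: field_simps)
  qed
  also have "\<dots> \<le> d / real (card risk_set) * 1 * sqrt d * prob_N m"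
  proof -
    have "real m / (2 * (real m - 1)) \<le> 1"
      using True by (simp add: field_simps)
    moreover have "sqrt \<mu> \<le> sqrt d" "1 \<le> sqrt d"
      using \<mu> d by simp_all
    then have "1 + sqrt \<mu> \<le> 2 * sqrt d"
      by linarith
    then have "(1 + sqrt \<mu>) / 2 \<le> sqrt d"
      by simp
    ultimately show ?thesis
      using True d \<mu>(1) by (intro mult_right_mono mult_mono mult_left_mono) (auto simp: prob_N_def)
  qed
  finally show ?thesis
    by (simp add: d_def)
next
  case False
  then show ?thesis
    by (simp add: xi2_majorant_def prob_N_def)
qed

lemma integral_xi2_majorant_le:
  assumes "1 \<le> card tie_set"
  shows "(\<integral>\<omega>. xi2_majorant (N \<omega>) (D \<omega>) \<partial>\<Omega>)
    \<le> real (card tie_set) / real (card risk_set) * sqrt (real (card tie_set))"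
proof -
  define c where "c = real (card tie_set) / real (card risk_set) * sqrt (real (card tie_set))"
  have "(\<integral>\<omega>. xi2_majorant (N \<omega>) (D \<omega>) \<partial>\<Omega>) \<le> (\<Sum>m\<le>card risk_set. c * prob_N m)"
    unfolding integral_fun_N_D(2) c_def using sum_xi2_majorant_le[OF assms] by (intro sum_mono) auto
  also have "\<dots> = c"
    by (simp add: sum_distrib_left[symmetric] sum_prob_N)
  finally show ?thesis
    by (simp add: c_def)
qed

end

section \<open>Summing over the event times\<close>

lemma bounded_in_prob_if_dominated:
  fixes X :: "nat \<Rightarrow> 'a \<Rightarrow> real"
  assumes prob: "\<And>n. prob_space (M n)" and C: "0 < C"
    and dominated: "\<And>n. m \<le> n \<Longrightarrow> \<exists>Y. integrable (M n) Y \<and>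
      (\<forall>\<omega>\<in>space (M n). \<bar>X n \<omega>\<bar> \<le> Y \<omega>) \<and> (\<integral>\<omega>. Y \<omega> \<partial>M n) \<le> C"
  shows "bounded_in_prob M X"
  unfolding bounded_in_prob_def
proof (intro allI impI)
  fix e :: real assume e: "0 < e"
  have "measure (M n) {\<omega>\<in>space (M n). C / e < \<bar>X n \<omega>\<bar>} \<le> e" if n: "m \<le> n" for n
  proof -
    interpret prob_space "M n"
      by (rule prob)
    obtain Y where Y: "integrable (M n) Y" "\<And>\<omega>. \<omega> \<in> space (M n) \<Longrightarrow> \<bar>X n \<omega>\<bar> \<le> Y \<omega>"
      "(\<integral>\<omega>. Y \<omega> \<partial>M n) \<le> C"
      using dominated[OF n] by blast
    have "measure (M n) {\<omega>\<in>space (M n). C / e < \<bar>X n \<omega>\<bar>}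
        \<le> measure (M n) {\<omega>\<in>space (M n). C / e \<le> Y \<omega>}"
    proof (cases "{\<omega>\<in>space (M n). C / e < \<bar>X n \<omega>\<bar>} \<in> sets (M n)")
      case True
      then show ?thesis
        using Y(2) borel_measurable_integrable[OF Y(1)]
        by (intro finite_measure_mono) (fastforce, measurable)
    qed (simp add: measure_notin_sets)
    also have "\<dots> \<le> (\<integral>\<omega>. Y \<omega> \<partial>M n) / (C / e)"
      using Y C e by (intro integral_Markov_inequality_measure[where A = "space (M n)"])
        (auto intro: order_trans[OF abs_ge_zero])
    also have "\<dots> \<le> e"
      using Y(3) C e by (simp add: field_simps)
    finally show ?thesis .
  qed
  then show "\<exists>B N. \<forall>n\<ge>N. measure (M n) {\<omega>\<in>space (M n). B < \<bar>X n \<omega>\<bar>} \<le> e"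
    by blast
qed

lemma prob_space_trial_space: "prob_space G \<Longrightarrow> prob_space (trial_space n p G)"
  unfolding trial_space_def
  by (intro prob_space_PiM prob_space_pair) (auto simp: prob_space_measure_pmf)

lemma one_le_max_tie: "0 < n \<Longrightarrow> 1 \<le> max_tie n t"
proof -
  assume "0 < n"
  then have "t 0 \<in> distinct_times n t"
    by (simp add: distinct_times_def)
  moreover have "1 \<le> tie_count n t (t 0)"
    using \<open>0 < n\<close> by (auto simp: tie_count_def Suc_le_eq card_gt_0_iff)
  moreover have "tie_count n t (t 0) \<le> max_tie n t"
    unfolding max_tie_def using \<open>t 0 \<in> distinct_times n t\<close>
    by (intro Max_ge) (simp_all add: distinct_times_def)
  ultimately show ?thesis
    by linarith
qed

lemma xi2_dominated:
  fixes t :: "nat \<Rightarrow> real" and G :: "(ennreal \<times> ennreal) measure"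
  assumes "prob_space G" "sets G = sets (borel \<Otimes>\<^sub>M borel)"
    and "\<And>i. i < n \<Longrightarrow> 0 \<le> t i" and v: "v \<in> distinct_times n t"
  shows "\<exists>g. integrable (trial_space n p G) g
    \<and> (\<forall>\<omega>. \<bar>xi2 (trial_space n p G) n t v \<omega>\<bar> \<le> g \<omega>)
    \<and> (\<integral>\<omega>. g \<omega> \<partial>trial_space n p G)
      \<le> real (tie_count n t v) / real (card {i. i < n \<and> v \<le> t i}) * sqrt (real (tie_count n t v))"
proof -
  obtain i where i: "i < n" "t i = v"
    using v by (auto simp: distinct_times_def)
  interpret censored_trial n p G t v
    using assms i by (intro censored_trial.intro) auto
  have "1 \<le> card tie_set"
    using i by (auto simp: Suc_le_eq card_gt_0_iff)
  then have "(\<integral>\<omega>. xi2_majorant (N \<omega>) (D \<omega>) \<partial>\<Omega>)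
      \<le> real (tie_count n t v) / real (card risk_set) * sqrt (real (tie_count n t v))"
    unfolding tie_count_def by (rule integral_xi2_majorant_le)
  moreover have "integrable \<Omega> (\<lambda>\<omega>. xi2_majorant (N \<omega>) (D \<omega>))"
    by (rule integral_fun_N_D(1))
  ultimately show ?thesis
    using abs_xi2_le_majorant unfolding trial_space_eq by blast
qed

lemma sum_tie_count_sqrt_le:
  fixes t :: "nat \<Rightarrow> real"
  shows "(\<Sum>v\<in>distinct_times n t. real (tie_count n t v) / real (card {i. i < n \<and> v \<le> t i})
      * sqrt (real (tie_count n t v)))
    \<le> sqrt (real (max_tie n t)) * harm n"
proof -
  have "tie_count n t v \<le> max_tie n t" if "v \<in> distinct_times n t" for v
    unfolding max_tie_def using that by (intro Max_ge) (simp_all add: distinct_times_def)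
  then have "(\<Sum>v\<in>distinct_times n t. real (tie_count n t v) / real (card {i. i < n \<and> v \<le> t i})
        * sqrt (real (tie_count n t v)))
      \<le> (\<Sum>v\<in>distinct_times n t. real (tie_count n t v) / real (card {i. i < n \<and> v \<le> t i})
        * sqrt (real (max_tie n t)))"
    by (intro sum_mono mult_left_mono) auto
  also have "\<dots> = sqrt (real (max_tie n t))
      * (\<Sum>v\<in>distinct_times n t. real (tie_count n t v) / real (card {i. i < n \<and> v \<le> t i}))"
    unfolding sum_distrib_left by (simp add: mult.commute)
  also have "\<dots> \<le> sqrt (real (max_tie n t)) * harm n"
    using sum_tie_count_div_at_risk_le_harm[of n t] by (intro mult_left_mono) simp_all
  finally show ?thesis .
qed

lemma xi2_sum_dominated:
  fixes t :: "nat \<Rightarrow> real" and G :: "(ennreal \<times> ennreal) measure"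
  assumes "prob_space G" "sets G = sets (borel \<Otimes>\<^sub>M borel)" and "\<And>i. i < n \<Longrightarrow> 0 \<le> t i"
  obtains Y where "integrable (trial_space n p G) Y"
    "\<And>\<omega>. \<bar>xi2_sum (trial_space n p G) n t \<omega>\<bar> \<le> Y \<omega>"
    "(\<integral>\<omega>. Y \<omega> \<partial>trial_space n p G) \<le> sqrt (real (max_tie n t)) * harm n"
proof -
  define V where "V = distinct_times n t"
  define bound where "bound v = real (tie_count n t v) / real (card {i. i < n \<and> v \<le> t i})
    * sqrt (real (tie_count n t v))" for v
  have "\<forall>v\<in>V. \<exists>g. integrable (trial_space n p G) g
      \<and> (\<forall>\<omega>. \<bar>xi2 (trial_space n p G) n t v \<omega>\<bar> \<le> g \<omega>)
      \<and> (\<integral>\<omega>. g \<omega> \<partial>trial_space n p G) \<le> bound v"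
    unfolding V_def bound_def using xi2_dominated[where t = t, OF assms] by simp
  from bchoice[OF this] obtain g where "\<forall>v\<in>V. integrable (trial_space n p G) (g v)
      \<and> (\<forall>\<omega>. \<bar>xi2 (trial_space n p G) n t v \<omega>\<bar> \<le> g v \<omega>)
      \<and> (\<integral>\<omega>. g v \<omega> \<partial>trial_space n p G) \<le> bound v"
    by blast
  then have g: "\<And>v. v \<in> V \<Longrightarrow> integrable (trial_space n p G) (g v)"
      "\<And>v \<omega>. v \<in> V \<Longrightarrow> \<bar>xi2 (trial_space n p G) n t v \<omega>\<bar> \<le> g v \<omega>"
      "\<And>v. v \<in> V \<Longrightarrow> (\<integral>\<omega>. g v \<omega> \<partial>trial_space n p G) \<le> bound v"
    by blast+
  define Y where "Y \<omega> = (\<Sum>v\<in>V - {Max V}. g v \<omega>)" for \<omega>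
  have "integrable (trial_space n p G) Y"
    unfolding Y_def using g(1) by (intro Bochner_Integration.integrable_sum) auto
  moreover have "\<bar>xi2_sum (trial_space n p G) n t \<omega>\<bar> \<le> Y \<omega>" for \<omega>
    unfolding xi2_sum_def Y_def V_def[symmetric]
    using g(2) by (intro order_trans[OF sum_abs] sum_mono) auto
  moreover have "(\<integral>\<omega>. Y \<omega> \<partial>trial_space n p G) \<le> sqrt (real (max_tie n t)) * harm n"
  proof -
    have "(\<integral>\<omega>. Y \<omega> \<partial>trial_space n p G) = (\<Sum>v\<in>V - {Max V}. \<integral>\<omega>. g v \<omega> \<partial>trial_space n p G)"
      unfolding Y_def using g(1) by (intro Bochner_Integration.integral_sum) auto
    also have "\<dots> \<le> (\<Sum>v\<in>V - {Max V}. bound v)"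
      using g(3) by (intro sum_mono) auto
    also have "\<dots> \<le> (\<Sum>v\<in>V. bound v)"
      by (intro sum_mono2) (auto simp: V_def distinct_times_def bound_def)
    also have "\<dots> \<le> sqrt (real (max_tie n t)) * harm n"
      unfolding V_def bound_def by (rule sum_tie_count_sqrt_le)
    finally show ?thesis .
  qed
  ultimately show thesis
    by (rule that)
qed

lemma xi2_sum_normalized_dominated:
  fixes t :: "nat \<Rightarrow> real" and G :: "(ennreal \<times> ennreal) measure"
  assumes "prob_space G" "sets G = sets (borel \<Otimes>\<^sub>M borel)" "\<And>i. i < n \<Longrightarrow> 0 \<le> t i"
    and "3 \<le> n"
  shows "\<exists>Y. integrable (trial_space n p G) Y
    \<and> (\<forall>\<omega>\<in>space (trial_space n p G).
         \<bar>xi2_sum (trial_space n p G) n t \<omega> / (sqrt (real (max_tie n t)) * ln (real n))\<bar> \<le> Y \<omega>)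
    \<and> (\<integral>\<omega>. Y \<omega> \<partial>trial_space n p G) \<le> 2"
proof -
  define c where "c = sqrt (real (max_tie n t)) * ln (real n)"
  have "exp 1 \<le> real n"
    using \<open>3 \<le> n\<close> exp_le by linarith
  then have ln_n: "1 \<le> ln (real n)"
    using \<open>3 \<le> n\<close> by (subst ln_ge_iff) auto
  have sqrt_pos: "0 < sqrt (real (max_tie n t))"
    using one_le_max_tie[of n t] \<open>3 \<le> n\<close> by simp
  then have "0 < c"
    using ln_n by (simp add: c_def)
  obtain Y where Y: "integrable (trial_space n p G) Y"
    "\<And>\<omega>. \<bar>xi2_sum (trial_space n p G) n t \<omega>\<bar> \<le> Y \<omega>"
    "(\<integral>\<omega>. Y \<omega> \<partial>trial_space n p G) \<le> sqrt (real (max_tie n t)) * harm n"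
    using xi2_sum_dominated[where n = n and t = t and p = p, OF assms(1-3)] by blast
  have "(\<integral>\<omega>. Y \<omega> / c \<partial>trial_space n p G) \<le> sqrt (real (max_tie n t)) * harm n / c"
    using Y(3) \<open>0 < c\<close> by (simp add: divide_right_mono)
  also have "\<dots> = harm n / ln (real n)"
    using sqrt_pos by (simp add: c_def)
  also have "\<dots> \<le> 2"
    using harm_le_1_plus_ln[of n] \<open>3 \<le> n\<close> ln_n by (simp add: field_simps)
  finally have "(\<integral>\<omega>. Y \<omega> / c \<partial>trial_space n p G) \<le> 2" .
  moreover have "\<bar>xi2_sum (trial_space n p G) n t \<omega> / c\<bar> \<le> Y \<omega> / c" for \<omega>
    using Y(2) \<open>0 < c\<close> by (simp add: divide_right_mono)
  ultimately show ?thesis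
    using Y(1) unfolding c_def by blast
qed

theorem lemmaA9:
  fixes t :: "nat \<Rightarrow> nat \<Rightarrow> real"
    and p :: "nat \<Rightarrow> real"
    and G :: "nat \<Rightarrow> (ennreal \<times> ennreal) measure"
  assumes t_nonneg: "\<And>n i. i < n \<Longrightarrow> 0 \<le> t n i"
    and p_range: "\<And>n. 0 < p n \<and> p n < 1"
    and G_prob: "\<And>n. prob_space (G n)"
    and G_sets: "\<And>n. sets (G n) = sets (borel \<Otimes>\<^sub>M borel)"
  shows "bounded_in_prob (\<lambda>n. trial_space n (p n) (G n))
           (\<lambda>n \<omega>. xi2_sum (trial_space n (p n) (G n)) n (t n) \<omega>
                    / (sqrt (real (max_tie n (t n))) * ln (real n)))"
proof (rule bounded_in_prob_if_dominated[where m = 3 and C = 2])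
  show "prob_space (trial_space n (p n) (G n))" for n
    using G_prob by (rule prob_space_trial_space)
next
  show "\<exists>Y. integrable (trial_space n (p n) (G n)) Y
    \<and> (\<forall>\<omega>\<in>space (trial_space n (p n) (G n)). \<bar>xi2_sum (trial_space n (p n) (G n)) n (t n) \<omega>
        / (sqrt (real (max_tie n (t n))) * ln (real n))\<bar> \<le> Y \<omega>)
    \<and> (\<integral>\<omega>. Y \<omega> \<partial>trial_space n (p n) (G n)) \<le> 2" if "3 \<le> n" for n
    using G_prob G_sets t_nonneg that by (rule xi2_sum_normalized_dominated[where t = "t n"])
qed simp

end
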